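(* Let $h$ be a ternary cubic form whose Hessian $H(h)$ is defined (not identically zero). If $f$ and $g$ are two cubic forms in the pencil $\langle h, H(h)\rangle$ spanned by $h$ and its Hessian, then $R(f,g,-)=0$, i.e. $R(f,g,c)=0$ for every cubic form $c$.
   Context: Let $R\in\bigwedge^3(\mathrm{Sym}^3\mathbb{C}^3)^*$ be the alternating trilinear form on the space $\mathrm{Sym}^3\mathbb{C}^3$ of ternary cubic forms determined by $R(l^3,m^3,n^3)=(\det(l,m,n))^3$ for linear forms $l,m,n$ in $x,y,z$, where $\det(l,m,n)$ is the determinant of the $3\times3$ matrix of their coefficients. The Hessian of a cubic $h$ is $H(h)=\det(\partial^2h/\partial x_i\partial x_j)$. *)

theory Defs
  imports "HOL-Analysis.Analysis" "HOL-Combinatorics.Permutations"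
begin

text \<open>Ternary cubic forms over the complex numbers, in the variables x = v$1, y = v$2, z = v$3,
  represented by their coefficient functions on exponent triples (a,b,c) (monomial x^a y^b z^c).\<close>

type_synonym cubic = "nat \<times> nat \<times> nat \<Rightarrow> complex"

definition is_cubic :: "cubic \<Rightarrow> bool" where
  "is_cubic f \<longleftrightarrow> (\<forall>a b c. a + b + c \<noteq> 3 \<longrightarrow> f (a, b, c) = 0)"

definition ceval :: "cubic \<Rightarrow> complex^3 \<Rightarrow> complex" where
  "ceval f v = (\<Sum>a\<le>3. \<Sum>b\<le>3 - a. f (a, b, 3 - a - b) * (v$1)^a * (v$2)^b * (v$3)^(3 - a - b))"


definition cnt :: "3 \<Rightarrow> 3 \<Rightarrow> 3 \<Rightarrow> 3 \<Rightarrow> nat" where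
  "cnt t i j k = of_bool (i = t) + of_bool (j = t) + of_bool (k = t)"

text \<open>The symmetric coefficient tensor F of f, so that f(v) = sum_{i,j,k} F i j k v_i v_j v_k.\<close>
definition tens :: "cubic \<Rightarrow> 3 \<Rightarrow> 3 \<Rightarrow> 3 \<Rightarrow> complex" where
  "tens f i j k =
     f (cnt 1 i j k, cnt 2 i j k, cnt 3 i j k)
     * of_nat (fact (cnt 1 i j k) * fact (cnt 2 i j k) * fact (cnt 3 i j k)) / 6"

text \<open>Hessian H(h)(v) = det (d^2 h / dx_i dx_j)(v); note d^2 h/dx_i dx_j = 6 sum_k F i j k x_k.\<close>
definition hess :: "cubic \<Rightarrow> complex^3 \<Rightarrow> complex" where
  "hess h v = det (\<chi> i j. 6 * (\<Sum>k\<in>UNIV. tens h i j k * v$k))"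

text \<open>The alternating trilinear form R on Sym^3 C^3, written out explicitly: it is trilinear
  and R(l^3,m^3,n^3) = det(l,m,n)^3, which determines it since cubes of linear forms span.\<close>
definition R :: "cubic \<Rightarrow> cubic \<Rightarrow> cubic \<Rightarrow> complex" where
  "R f g c = (\<Sum>\<sigma>\<in>{p. p permutes (UNIV::3 set)}. \<Sum>\<tau>\<in>{p. p permutes (UNIV::3 set)}.
      \<Sum>\<rho>\<in>{p. p permutes (UNIV::3 set)}.
        of_int (sign \<sigma> * sign \<tau> * sign \<rho>)
        * tens f (\<sigma> 1) (\<tau> 1) (\<rho> 1) * tens g (\<sigma> 2) (\<tau> 2) (\<rho> 2) * tens c (\<sigma> 3) (\<tau> 3) (\<rho> 3))"

end

theory Submission
  imports Defs
begin

text \<open>In monomial coordinates, R(f,g,c) pairs the coefficients of c with the Pluecker coordinates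
  f_p g_q - f_q g_p of f \<and> g. On the pencil spanned by h and k these are the coordinates of h \<and> k
  times the determinant of the two coefficient vectors, so it suffices to show R(h,H(h),c) = 0.
  The Hessian of a cubic is again a cubic, with coefficients explicit cubic polynomials in those
  of h, and R(h,H(h),c) = 0 becomes a polynomial identity in the coefficients of h and c.\<close>

definition wedge ::
    "cubic \<Rightarrow> cubic \<Rightarrow> nat \<times> nat \<times> nat \<Rightarrow> nat \<times> nat \<times> nat \<Rightarrow> complex" where
  "wedge f g p q = f p * g q - f q * g p"

lemma wedge_pencil:
  "wedge (\<lambda>m. a1 * h m + b1 * k m) (\<lambda>m. a2 * h m + b2 * k m) p q =
    (a1 * b2 - b1 * a2) * wedge h k p q"
  by (simp add: wedge_def algebra_simps)

lemma tens_explicit: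
  "tens f 1 1 1 = f (3,0,0)"
  "tens f 1 1 2 = f (2,1,0) / 3"
  "tens f 1 1 3 = f (2,0,1) / 3"
  "tens f 1 2 1 = f (2,1,0) / 3"
  "tens f 1 2 2 = f (1,2,0) / 3"
  "tens f 1 2 3 = f (1,1,1) / 6"
  "tens f 1 3 1 = f (2,0,1) / 3"
  "tens f 1 3 2 = f (1,1,1) / 6"
  "tens f 1 3 3 = f (1,0,2) / 3"
  "tens f 2 1 1 = f (2,1,0) / 3"
  "tens f 2 1 2 = f (1,2,0) / 3"
  "tens f 2 1 3 = f (1,1,1) / 6"
  "tens f 2 2 1 = f (1,2,0) / 3"
  "tens f 2 2 2 = f (0,3,0)"
  "tens f 2 2 3 = f (0,2,1) / 3"
  "tens f 2 3 1 = f (1,1,1) / 6"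
  "tens f 2 3 2 = f (0,2,1) / 3"
  "tens f 2 3 3 = f (0,1,2) / 3"
  "tens f 3 1 1 = f (2,0,1) / 3"
  "tens f 3 1 2 = f (1,1,1) / 6"
  "tens f 3 1 3 = f (1,0,2) / 3"
  "tens f 3 2 1 = f (1,1,1) / 6"
  "tens f 3 2 2 = f (0,2,1) / 3"
  "tens f 3 2 3 = f (0,1,2) / 3"
  "tens f 3 3 1 = f (1,0,2) / 3"
  "tens f 3 3 2 = f (0,1,2) / 3"
  "tens f 3 3 3 = f (0,0,3)"
  by (simp_all add: tens_def cnt_def eval_nat_numeral)

lemma sum_permutations_3:
  "(\<Sum>p\<in>{p. p permutes (UNIV::3 set)}. F p) =
    F id + F (Transposition.transpose 2 3)
    + F (Transposition.transpose 1 2) + F (Transposition.transpose 1 2 \<circ> Transposition.transpose 2 3)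
    + F (Transposition.transpose 1 3) + F (Transposition.transpose 1 3 \<circ> Transposition.transpose 2 3)"
proof -
  have f123: "finite {2::3, 3}" "1 \<notin> {2::3, 3}" by auto
  have f23: "finite {3::3}" "2 \<notin> {3::3}" by auto
  show ?thesis
    unfolding UNIV_3
    unfolding sum_over_permutations_insert[OF f123]
    unfolding sum_over_permutations_insert[OF f23]
    unfolding permutes_sing
    by (simp add: ac_simps)
qed

lemma R_explicit: "9 * R f g c =
    c (3,0,0) * (9 * wedge f g (0,3,0) (0,0,3) - 3 * wedge f g (0,2,1) (0,1,2))
  + c (2,1,0) * (- 3 * wedge f g (1,2,0) (0,0,3) + wedge f g (1,1,1) (0,1,2) - wedge f g (1,0,2) (0,2,1))
  + c (2,0,1) * (wedge f g (1,2,0) (0,1,2) - wedge f g (1,1,1) (0,2,1) + 3 * wedge f g (1,0,2) (0,3,0))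
  + c (1,2,0) * (3 * wedge f g (2,1,0) (0,0,3) - wedge f g (2,0,1) (0,1,2) - wedge f g (1,1,1) (1,0,2))
  + c (1,1,1) * (- wedge f g (2,1,0) (0,1,2) + wedge f g (2,0,1) (0,2,1) + wedge f g (1,2,0) (1,0,2))
  + c (1,0,2) * (wedge f g (2,1,0) (0,2,1) - 3 * wedge f g (2,0,1) (0,3,0) - wedge f g (1,2,0) (1,1,1))
  + c (0,3,0) * (- 9 * wedge f g (3,0,0) (0,0,3) + 3 * wedge f g (2,0,1) (1,0,2))
  + c (0,2,1) * (3 * wedge f g (3,0,0) (0,1,2) - wedge f g (2,1,0) (1,0,2) - wedge f g (2,0,1) (1,1,1))
  + c (0,1,2) * (- 3 * wedge f g (3,0,0) (0,2,1) + wedge f g (2,1,0) (1,1,1) + wedge f g (2,0,1) (1,2,0))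
  + c (0,0,3) * (9 * wedge f g (3,0,0) (0,3,0) - 3 * wedge f g (2,1,0) (1,2,0))"
  unfolding R_def sum_permutations_3
  by (simp add: sign_swap_id permutation_swap_id sign_compose swap_id_eq Transposition.transpose_def
      tens_explicit wedge_def algebra_simps)

lemma R_pencil:
  "R (\<lambda>m. a1 * h m + b1 * k m) (\<lambda>m. a2 * h m + b2 * k m) c = (a1 * b2 - b1 * a2) * R h k c"
proof -
  have "9 * R (\<lambda>m. a1 * h m + b1 * k m) (\<lambda>m. a2 * h m + b2 * k m) c =
      (a1 * b2 - b1 * a2) * (9 * R h k c)"
    unfolding R_explicit wedge_pencil by (simp add: algebra_simps)
  then show ?thesis by simp
qed

definition cubic_monomials :: "(nat \<times> nat \<times> nat) set" where
  "cubic_monomials =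
    {(3,0,0), (2,1,0), (2,0,1), (1,2,0), (1,1,1), (1,0,2), (0,3,0), (0,2,1), (0,1,2), (0,0,3)}"

lemma mem_cubic_monomials_iff: "(a, b, c) \<in> cubic_monomials \<longleftrightarrow> a + b + c = 3"
proof
  assume "a + b + c = 3"
  then have "a = 0 \<or> a = 1 \<or> a = 2 \<or> a = 3" "b = 0 \<or> b = 1 \<or> b = 2 \<or> b = 3"
      "c = 3 - a - b" "a + b \<le> 3"
    by arith+
  then show "(a, b, c) \<in> cubic_monomials" unfolding cubic_monomials_def by (elim disjE) simp_all
qed (auto simp: cubic_monomials_def)

lemma is_cubic_iff: "is_cubic f \<longleftrightarrow> (\<forall>m. m \<notin> cubic_monomials \<longrightarrow> f m = 0)"
  unfolding is_cubic_def by (auto simp: mem_cubic_monomials_iff)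

lemma ceval_explicit:
  "ceval f v =
     f (3,0,0) * v$1 ^ 3 + f (2,1,0) * v$1 ^ 2 * v$2 + f (2,0,1) * v$1 ^ 2 * v$3
   + f (1,2,0) * v$1 * v$2 ^ 2 + f (1,1,1) * v$1 * v$2 * v$3 + f (1,0,2) * v$1 * v$3 ^ 2
   + f (0,3,0) * v$2 ^ 3 + f (0,2,1) * v$2 ^ 2 * v$3 + f (0,1,2) * v$2 * v$3 ^ 2 + f (0,0,3) * v$3 ^ 3"
  by (simp add: ceval_def eval_nat_numeral atMost_Suc algebra_simps)

lemma cubic_eq_0_if_ceval_eq_0:
  assumes "is_cubic f" and ceval_0: "\<And>v. ceval f v = 0"
  shows "f m = 0"
proof -
  have at: "ceval f (vector [x, y, z]) = 0" for x y z
    using ceval_0 .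
  have cubes: "f (3,0,0) = 0" "f (0,3,0) = 0" "f (0,0,3) = 0"
    using at[of 1 0 0] at[of 0 1 0] at[of 0 0 1] by (simp_all add: ceval_explicit)
  have "f (2,1,0) + f (1,2,0) = 0" "f (2,1,0) - f (1,2,0) = 0"
       "f (2,0,1) + f (1,0,2) = 0" "f (2,0,1) - f (1,0,2) = 0"
       "f (0,2,1) + f (0,1,2) = 0" "f (0,2,1) - f (0,1,2) = 0"
    using at[of 1 1 0] at[of 1 "-1" 0] at[of 1 0 1] at[of 1 0 "-1"] at[of 0 1 1] at[of 0 1 "-1"] cubes
    by (simp_all add: ceval_explicit)
  then have mixed:
      "f (2,1,0) = 0" "f (1,2,0) = 0" "f (2,0,1) = 0" "f (1,0,2) = 0" "f (0,2,1) = 0" "f (0,1,2) = 0"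
    by (auto simp: add_eq_0_iff)
  moreover have "f (1,1,1) = 0"
    using at[of 1 1 1] cubes mixed by (simp add: ceval_explicit)
  ultimately have "f m = 0" if "m \<in> cubic_monomials"
    using that cubes unfolding cubic_monomials_def by auto
  then show ?thesis
    using \<open>is_cubic f\<close> unfolding is_cubic_iff by blast
qed

definition hess_coeffs :: "cubic \<Rightarrow> cubic" where
  "hess_coeffs h m =
     (if m = (3,0,0) then
        24 * h (1,0,2) * h (1,2,0) * h (3,0,0) - 8 * h (1,0,2) * h (2,1,0) ^ 2
        - 6 * h (1,1,1) ^ 2 * h (3,0,0) + 8 * h (1,1,1) * h (2,0,1) * h (2,1,0)
        - 8 * h (1,2,0) * h (2,0,1) ^ 2
      else if m = (2,1,0) then
        24 * h (0,1,2) * h (1,2,0) * h (3,0,0) - 8 * h (0,1,2) * h (2,1,0) ^ 2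
        - 24 * h (0,2,1) * h (1,1,1) * h (3,0,0) + 16 * h (0,2,1) * h (2,0,1) * h (2,1,0)
        + 72 * h (0,3,0) * h (1,0,2) * h (3,0,0) - 24 * h (0,3,0) * h (2,0,1) ^ 2
        - 8 * h (1,0,2) * h (1,2,0) * h (2,1,0) + 2 * h (1,1,1) ^ 2 * h (2,1,0)
      else if m = (2,0,1) then
        72 * h (0,0,3) * h (1,2,0) * h (3,0,0) - 24 * h (0,0,3) * h (2,1,0) ^ 2
        - 24 * h (0,1,2) * h (1,1,1) * h (3,0,0) + 16 * h (0,1,2) * h (2,0,1) * h (2,1,0)
        + 24 * h (0,2,1) * h (1,0,2) * h (3,0,0) - 8 * h (0,2,1) * h (2,0,1) ^ 2
        - 8 * h (1,0,2) * h (1,2,0) * h (2,0,1) + 2 * h (1,1,1) ^ 2 * h (2,0,1)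
      else if m = (1,2,0) then
        72 * h (0,1,2) * h (0,3,0) * h (3,0,0) - 8 * h (0,1,2) * h (1,2,0) * h (2,1,0)
        - 24 * h (0,2,1) ^ 2 * h (3,0,0) + 16 * h (0,2,1) * h (1,2,0) * h (2,0,1)
        + 24 * h (0,3,0) * h (1,0,2) * h (2,1,0) - 24 * h (0,3,0) * h (1,1,1) * h (2,0,1)
        - 8 * h (1,0,2) * h (1,2,0) ^ 2 + 2 * h (1,1,1) ^ 2 * h (1,2,0)
      else if m = (1,1,1) then
        216 * h (0,0,3) * h (0,3,0) * h (3,0,0) - 24 * h (0,0,3) * h (1,2,0) * h (2,1,0)
        - 24 * h (0,1,2) * h (0,2,1) * h (3,0,0) - 8 * h (0,1,2) * h (1,1,1) * h (2,1,0)
        + 24 * h (0,1,2) * h (1,2,0) * h (2,0,1) + 24 * h (0,2,1) * h (1,0,2) * h (2,1,0)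
        - 8 * h (0,2,1) * h (1,1,1) * h (2,0,1) - 24 * h (0,3,0) * h (1,0,2) * h (2,0,1)
        - 8 * h (1,0,2) * h (1,1,1) * h (1,2,0) + 2 * h (1,1,1) ^ 3
      else if m = (1,0,2) then
        72 * h (0,0,3) * h (0,2,1) * h (3,0,0) - 24 * h (0,0,3) * h (1,1,1) * h (2,1,0)
        + 24 * h (0,0,3) * h (1,2,0) * h (2,0,1) - 24 * h (0,1,2) ^ 2 * h (3,0,0)
        + 16 * h (0,1,2) * h (1,0,2) * h (2,1,0) - 8 * h (0,2,1) * h (1,0,2) * h (2,0,1)
        - 8 * h (1,0,2) ^ 2 * h (1,2,0) + 2 * h (1,0,2) * h (1,1,1) ^ 2
      else if m = (0,3,0) then
        24 * h (0,1,2) * h (0,3,0) * h (2,1,0) - 8 * h (0,1,2) * h (1,2,0) ^ 2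
        - 8 * h (0,2,1) ^ 2 * h (2,1,0) + 8 * h (0,2,1) * h (1,1,1) * h (1,2,0)
        - 6 * h (0,3,0) * h (1,1,1) ^ 2
      else if m = (0,2,1) then
        72 * h (0,0,3) * h (0,3,0) * h (2,1,0) - 24 * h (0,0,3) * h (1,2,0) ^ 2
        - 8 * h (0,1,2) * h (0,2,1) * h (2,1,0) + 24 * h (0,1,2) * h (0,3,0) * h (2,0,1)
        - 8 * h (0,2,1) ^ 2 * h (2,0,1) + 16 * h (0,2,1) * h (1,0,2) * h (1,2,0)
        + 2 * h (0,2,1) * h (1,1,1) ^ 2 - 24 * h (0,3,0) * h (1,0,2) * h (1,1,1)
      else if m = (0,1,2) then
        24 * h (0,0,3) * h (0,2,1) * h (2,1,0) + 72 * h (0,0,3) * h (0,3,0) * h (2,0,1)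
        - 24 * h (0,0,3) * h (1,1,1) * h (1,2,0) - 8 * h (0,1,2) ^ 2 * h (2,1,0)
        - 8 * h (0,1,2) * h (0,2,1) * h (2,0,1) + 16 * h (0,1,2) * h (1,0,2) * h (1,2,0)
        + 2 * h (0,1,2) * h (1,1,1) ^ 2 - 24 * h (0,3,0) * h (1,0,2) ^ 2
      else if m = (0,0,3) then
        24 * h (0,0,3) * h (0,2,1) * h (2,0,1) - 6 * h (0,0,3) * h (1,1,1) ^ 2
        - 8 * h (0,1,2) ^ 2 * h (2,0,1) + 8 * h (0,1,2) * h (1,0,2) * h (1,1,1)
        - 8 * h (0,2,1) * h (1,0,2) ^ 2
      else 0)"

lemma is_cubic_hess_coeffs: "is_cubic (hess_coeffs h)"
  unfolding is_cubic_iff by (simp add: hess_coeffs_def cubic_monomials_def)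

lemma ceval_hess_coeffs: "ceval (hess_coeffs h) v = hess h v"
  unfolding hess_def det_3 sum_3 ceval_explicit
  by (simp add: hess_coeffs_def tens_explicit algebra_simps power2_eq_square power3_eq_cube)

lemma R_hess_coeffs: "R h (hess_coeffs h) c = 0"
proof -
  have "9 * R h (hess_coeffs h) c = 0"
    unfolding R_explicit
    by (simp add: wedge_def hess_coeffs_def algebra_simps power2_eq_square power3_eq_cube)
  then show ?thesis by simp
qed

lemma hessian_pencil_coeffs:
  assumes "is_cubic h" "is_cubic f" "\<And>v. ceval f v = a * ceval h v + b * hess h v"
  shows "f = (\<lambda>m. a * h m + b * hess_coeffs h m)"
proof
  fix m
  let ?d = "\<lambda>m. f m - a * h m - b * hess_coeffs h m"
  have "is_cubic ?d"
    using assms(1,2) is_cubic_hess_coeffs[of h] by (simp add: is_cubic_def)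
  moreover have "ceval ?d v = 0" for v
  proof -
    have "ceval ?d v = ceval f v - a * ceval h v - b * ceval (hess_coeffs h) v"
      by (simp add: ceval_explicit algebra_simps)
    then show ?thesis
      using assms(3) ceval_hess_coeffs by simp
  qed
  ultimately have "?d m = 0"
    by (rule cubic_eq_0_if_ceval_eq_0)
  then show "f m = a * h m + b * hess_coeffs h m"
    by (simp add: algebra_simps)
qed

theorem mainTheorem2:
  fixes h f g :: cubic
  assumes "is_cubic h" and "\<exists>v. hess h v \<noteq> 0"
    and "is_cubic f" and "\<exists>a b. \<forall>v. ceval f v = a * ceval h v + b * hess h v"
    and "is_cubic g" and "\<exists>a b. \<forall>v. ceval g v = a * ceval h v + b * hess h v"
  shows "\<forall>c. is_cubic c \<longrightarrow> R f g c = 0"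
proof (intro allI impI)
  fix c :: cubic
  obtain a1 b1 where "\<forall>v. ceval f v = a1 * ceval h v + b1 * hess h v" using assms(4) by blast
  then have f: "f = (\<lambda>m. a1 * h m + b1 * hess_coeffs h m)"
    using hessian_pencil_coeffs assms(1,3) by blast
  obtain a2 b2 where "\<forall>v. ceval g v = a2 * ceval h v + b2 * hess h v" using assms(6) by blast
  then have g: "g = (\<lambda>m. a2 * h m + b2 * hess_coeffs h m)"
    using hessian_pencil_coeffs assms(1,5) by blast
  show "R f g c = 0"
    unfolding f g R_pencil R_hess_coeffs by simp
qed

end
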